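(* Let $L$ be one of the Lie algebras $\mathcal{L}$, $\mathrm{Vir}$, $\widetilde{\mathcal{W}}$, $\mathcal{W}$ (defined in the context), with its $\mathbb{Z}$-gradation $L=\bigoplus_{i} L_i$, and for $k\in\mathbb{Z}$ put $L^{(k)}=\sum_{i\ge k}L_i$. Let $V$ be a simple $L$-module. Then the following conditions are equivalent: (a) $V$ satisfies Condition A: for every $v\in V$ there is a positive integer $n$ such that $L_i v=0$ for all $i\ge n$; (b) there exist $0\ne v\in V$ and $s\in\mathbb{N}$ such that $L^{(s)}v=0$; (c) there exists $k\in\mathbb{N}$ such that $V$ is a locally finite $L^{(k)}$-module (every $v\in V$ lies in a finite-dimensional $L^{(k)}$-submodule); (d) there exists $m\in\mathbb{N}$ such that $V$ is a locally nilpotent $L^{(m)}$-module (for every $v\in V$ there is $n\in\mathbb{N}$ with $a_1a_2\cdots a_n v=0$ for all $a_1,\dots,a_n\in L^{(m)}$).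
   Context: $\mathbb{N}$ denotes the positive integers. The twisted Heisenberg–Virasoro algebra $\mathcal{L}$ has basis $\{d_n,I_n,z_1,z_2,z_3\mid n\in\mathbb{Z}\}$ (where $d_n=t^{n+1}\frac{d}{dt}$, $I_n=t^n$) with brackets $[d_n,d_m]=(m-n)d_{m+n}+\delta_{n,-m}\frac{n^3-n}{12}z_1$, $[d_n,I_m]=mI_{m+n}+\delta_{n,-m}(n^2+n)z_2$, $[I_n,I_m]=n\delta_{n,-m}z_3$, and $z_1,z_2,z_3$ central. Its gradation is $\mathcal{L}_n=\mathbb{C}d_n+\mathbb{C}I_n$ for $n\neq0$ and $\mathcal{L}_0=\mathbb{C}d_0+\mathbb{C}I_0+\mathbb{C}z_1+\mathbb{C}z_2+\mathbb{C}z_3$. $\mathrm{Vir}$ is the subalgebra spanned by $\{d_i,z_1\mid i\in\mathbb{Z}\}$; $\widetilde{\mathcal{W}}=\mathbb{C}[t]\frac{d}{dt}+\mathbb{C}[t]$ is the subalgebra spanned by $\{d_i\,(i\ge -1),\ I_i\,(i\ge 0)\}$; $\mathcal{W}=\mathrm{Der}(\mathbb{C}[t])$ is spanned by $\{d_i\mid i\ge -1\}$. Each is graded by giving $d_i,I_i$ degree $i$ and $z_j$ degree $0$. *)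

theory Defs
  imports Complex_Main
begin

(* Basis of the twisted Heisenberg-Virasoro algebra:
   D n = d_n, I n = I_n, Z1, Z2, Z3 = z_1, z_2, z_3. *)
datatype gen = D int | I int | Z1 | Z2 | Z3

datatype alg = HV (* \<L> *) | Vir | Wt (* \<widetilde>\<W> *) | W (* \<W> = Der C[t] *)

fun inB :: "alg \<Rightarrow> gen \<Rightarrow> bool" where
  "inB HV g = True"
| "inB Vir (D n) = True"
| "inB Vir Z1 = True"
| "inB Vir _ = False"
| "inB Wt (D n) = (n \<ge> -1)"
| "inB Wt (I n) = (n \<ge> 0)"
| "inB Wt _ = False"
| "inB W (D n) = (n \<ge> -1)"
| "inB W _ = False"

fun deg :: "gen \<Rightarrow> int" where
  "deg (D n) = n" | "deg (I n) = n" | "deg Z1 = 0" | "deg Z2 = 0" | "deg Z3 = 0"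

(* elements of the Lie algebra: finite complex linear combinations of basis elements,
   represented by their coefficient functions *)
definition elems :: "alg \<Rightarrow> (gen \<Rightarrow> complex) set" where
  "elems A = {a. finite {g. a g \<noteq> 0} \<and> (\<forall>g. a g \<noteq> 0 \<longrightarrow> inB A g)}"

definition comp :: "alg \<Rightarrow> int \<Rightarrow> (gen \<Rightarrow> complex) set" where
  "comp A i = {a \<in> elems A. \<forall>g. a g \<noteq> 0 \<longrightarrow> deg g = i}"

definition upper :: "alg \<Rightarrow> int \<Rightarrow> (gen \<Rightarrow> complex) set" where
  "upper A k = {a \<in> elems A. \<forall>g. a g \<noteq> 0 \<longrightarrow> deg g \<ge> k}"

definition bv :: "gen \<Rightarrow> gen \<Rightarrow> complex" where
  "bv g = (\<lambda>x. if x = g then 1 else 0)"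

definition kd :: "int \<Rightarrow> int \<Rightarrow> complex" where
  "kd n m = (if n = m then 1 else 0)"

fun bracket :: "gen \<Rightarrow> gen \<Rightarrow> gen \<Rightarrow> complex" where
  "bracket (D n) (D m) = (\<lambda>x. of_int (m - n) * bv (D (m + n)) x
        + kd n (-m) * (of_int (n^3 - n) / 12) * bv Z1 x)"
| "bracket (D n) (I m) = (\<lambda>x. of_int m * bv (I (m + n)) x
        + kd n (-m) * of_int (n^2 + n) * bv Z2 x)"
| "bracket (I m) (D n) = (\<lambda>x. - (of_int m * bv (I (m + n)) x
        + kd n (-m) * of_int (n^2 + n) * bv Z2 x))"
| "bracket (I n) (I m) = (\<lambda>x. of_int n * kd n (-m) * bv Z3 x)"
| "bracket _ _ = (\<lambda>x. 0)"

definition act :: "(complex \<Rightarrow> 'v \<Rightarrow> 'v) \<Rightarrow> (gen \<Rightarrow> 'v \<Rightarrow> 'v)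
    \<Rightarrow> (gen \<Rightarrow> complex) \<Rightarrow> 'v \<Rightarrow> 'v::ab_group_add" where
  "act sc rho a v = (\<Sum>g\<in>{g. a g \<noteq> 0}. sc (a g) (rho g v))"

(* a module over the Lie algebra A: a complex vector space (the whole type 'v,
   scalar multiplication sc) with linear operators rho g for the basis elements g of A
   satisfying rho g rho h - rho h rho g = rho [g,h] *)
definition is_module :: "alg \<Rightarrow> (complex \<Rightarrow> 'v \<Rightarrow> 'v) \<Rightarrow> (gen \<Rightarrow> 'v \<Rightarrow> 'v::ab_group_add) \<Rightarrow> bool" where
  "is_module A sc rho \<longleftrightarrow> vector_space sc
     \<and> (\<forall>g. inB A g \<longrightarrow> Vector_Spaces.linear sc sc (rho g))
     \<and> (\<forall>g h v. inB A g \<and> inB A h \<longrightarrow>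
            rho g (rho h v) - rho h (rho g v) = act sc rho (bracket g h) v)"

definition is_submodule :: "alg \<Rightarrow> (complex \<Rightarrow> 'v \<Rightarrow> 'v) \<Rightarrow> (gen \<Rightarrow> 'v \<Rightarrow> 'v::ab_group_add) \<Rightarrow> 'v set \<Rightarrow> bool" where
  "is_submodule A sc rho U \<longleftrightarrow> module.subspace sc U \<and> (\<forall>g u. inB A g \<and> u \<in> U \<longrightarrow> rho g u \<in> U)"

definition simple_module :: "alg \<Rightarrow> (complex \<Rightarrow> 'v \<Rightarrow> 'v) \<Rightarrow> (gen \<Rightarrow> 'v \<Rightarrow> 'v::ab_group_add) \<Rightarrow> bool" where
  "simple_module A sc rho \<longleftrightarrow> is_module A sc rho \<and> (\<exists>v. v \<noteq> (0::'v))
     \<and> (\<forall>U. is_submodule A sc rho U \<longrightarrow> U = {0} \<or> U = UNIV)"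

definition condA :: "alg \<Rightarrow> (complex \<Rightarrow> 'v \<Rightarrow> 'v) \<Rightarrow> (gen \<Rightarrow> 'v \<Rightarrow> 'v::ab_group_add) \<Rightarrow> bool" where
  "condA A sc rho \<longleftrightarrow> (\<forall>v. \<exists>n::int. n > 0 \<and>
       (\<forall>i \<ge> n. \<forall>a \<in> comp A i. act sc rho a v = 0))"

definition condB :: "alg \<Rightarrow> (complex \<Rightarrow> 'v \<Rightarrow> 'v) \<Rightarrow> (gen \<Rightarrow> 'v \<Rightarrow> 'v::ab_group_add) \<Rightarrow> bool" where
  "condB A sc rho \<longleftrightarrow> (\<exists>v s::int. v \<noteq> 0 \<and> s \<ge> 1 \<and>
       (\<forall>a \<in> upper A s. act sc rho a v = 0))"

definition condC :: "alg \<Rightarrow> (complex \<Rightarrow> 'v \<Rightarrow> 'v) \<Rightarrow> (gen \<Rightarrow> 'v \<Rightarrow> 'v::ab_group_add) \<Rightarrow> bool" where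
  "condC A sc rho \<longleftrightarrow> (\<exists>k::int. k \<ge> 1 \<and> (\<forall>v. \<exists>U.
       module.subspace sc U \<and> (\<exists>B. finite B \<and> U = module.span sc B) \<and> v \<in> U \<and>
       (\<forall>a \<in> upper A k. \<forall>u \<in> U. act sc rho a u \<in> U)))"

definition condD :: "alg \<Rightarrow> (complex \<Rightarrow> 'v \<Rightarrow> 'v) \<Rightarrow> (gen \<Rightarrow> 'v \<Rightarrow> 'v::ab_group_add) \<Rightarrow> bool" where
  "condD A sc rho \<longleftrightarrow> (\<exists>m::int. m \<ge> 1 \<and> (\<forall>v. \<exists>n::nat. n \<ge> 1 \<and>
       (\<forall>as. length as = n \<and> set as \<subseteq> upper A m \<longrightarrow>
          foldr (\<lambda>a w. act sc rho a w) as v = 0)))"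

end

theory Submission
  imports Defs "HOL-Computational_Algebra.Polynomial" "HOL-Library.Function_Algebras"
begin

(*
  Condition (b) is the pivot. If v0 <> 0 is killed by all basis elements of degree >= s, then by
  simplicity V is spanned by the words x_1 ... x_r v0 in basis elements. Commuting a basis
  element of degree d past a letter of degree e only produces basis elements of degree d + e.
  Hence every basis element of large degree kills a given word, which gives (a); and an element
  of L^(s) maps a word of bounded length and letter degrees to a combination of such words of
  strictly larger total degree, which gives the finite-dimensional L^(s)-stable subspaces of (c)
  and, the total degree being bounded, the nilpotence of (d). Conversely, a shortest
  nonvanishing product of elements of L^(m) yields (b) from (d).

  For (c) => (b), identify d_(j-1) with t^j d/dt and I_j with t^j. On a finite-dimensional
  L^(k)-stable subspace U, the polynomials p divisible by t^(k+1) such that p d/dt (resp. p)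
  annihilates U form a nonzero group closed under brackets with t^(k+1) C[t]. It contains a
  nonzero ideal stable under t^(k+1) d/dt, hence a power t^M, so d_i and I_i kill U for i >= M.
*)

lemma inB_D: "i \<ge> -1 \<Longrightarrow> inB A (D i)"
  by (cases A) auto

lemma bracket_support:
  assumes "inB A g" "inB A h" "bracket g h x \<noteq> 0"
  shows "inB A x \<and> deg x = deg g + deg h"
proof -
  have small: "n = -1 \<or> n = 0 \<or> n = 1" if "-1 \<le> n" "n \<le> 1" for n :: int
    using that by auto
  have "n^3 = n" if "-1 \<le> n" "n \<le> 1" for n :: int
    using small[OF that] by auto
  moreover have "n^2 + n = 0" if "-1 \<le> n" "n \<le> 0" for n :: int
    using small[of n] that by auto
  moreover have "n^2 = n" if "0 \<le> n" "n \<le> 1" for n :: int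
    using small[of n] that by auto
  ultimately show ?thesis
    using assms
    by (cases g; cases h; cases A; cases x) (auto simp: bv_def kd_def algebra_simps split: if_splits)
qed

lemma bv_in_upper: "inB A g \<Longrightarrow> k \<le> deg g \<Longrightarrow> bv g \<in> upper A k"
  by (auto simp: upper_def elems_def bv_def)

lemma bv_in_comp: "inB A g \<Longrightarrow> bv g \<in> comp A (deg g)"
  by (auto simp: comp_def elems_def bv_def)

locale lie_module =
  fixes A :: alg and sc :: "complex \<Rightarrow> 'v::ab_group_add \<Rightarrow> 'v" and rho :: "gen \<Rightarrow> 'v \<Rightarrow> 'v"
  assumes is_module: "is_module A sc rho"
begin

sublocale vector_space sc
  using is_module unfolding is_module_def by auto

lemma rho_module_hom: "inB A g \<Longrightarrow> module_hom sc sc (rho g)"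
  using is_module unfolding is_module_def by (auto intro: module_hom_linearI)

lemmas rho_add = module_hom.add[OF rho_module_hom]
  and rho_scale = module_hom.scale[OF rho_module_hom]
  and rho_zero = module_hom.zero[OF rho_module_hom]

lemma rho_commute:
  "inB A g \<Longrightarrow> inB A h \<Longrightarrow> rho g (rho h v) = rho h (rho g v) + act sc rho (bracket g h) v"
  using is_module unfolding is_module_def by (metis diff_add_cancel add.commute)

lemma rho_in_span:
  assumes "inB A g" "u \<in> span X" "\<And>x. x \<in> X \<Longrightarrow> rho g x \<in> span Y"
  shows "rho g u \<in> span Y"
proof -
  have "span (rho g ` X) \<subseteq> span Y"
    using assms(3) by (intro span_minimal) auto
  then show ?thesis
    using module_hom.span_image[OF rho_module_hom[OF assms(1)], of X] assms(2) by auto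
qed

lemma act_bv: "act sc rho (bv g) v = rho g v"
proof -
  have "{x. bv g x \<noteq> 0} = {g}" by (auto simp: bv_def)
  then show ?thesis by (simp add: act_def bv_def)
qed

lemma act_scaled_bv: "act sc rho (\<lambda>x. c * bv g x) v = sc c (rho g v)"
proof (cases "c = 0")
  case False
  then have "{x. c * bv g x \<noteq> 0} = {g}" by (auto simp: bv_def)
  then show ?thesis by (simp add: act_def bv_def)
qed (simp add: act_def)

lemma act_eq_0: "(\<And>g. a g \<noteq> 0 \<Longrightarrow> rho g v = 0) \<Longrightarrow> act sc rho a v = 0"
  unfolding act_def by (intro sum.neutral) auto

lemma act_in_subspace:
  "subspace U \<Longrightarrow> (\<And>g. a g \<noteq> 0 \<Longrightarrow> rho g v \<in> U) \<Longrightarrow> act sc rho a v \<in> U"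
  unfolding act_def by (intro subspace_sum) (auto intro: subspace_scale)

lemma act_bracket_D_D:
  "n + m \<noteq> 0 \<Longrightarrow> act sc rho (bracket (D n) (D m)) v = sc (of_int (m - n)) (rho (D (m + n)) v)"
  by (simp add: kd_def act_scaled_bv)

lemma act_bracket_D_I:
  "n + m \<noteq> 0 \<Longrightarrow> act sc rho (bracket (D n) (I m)) v = sc (of_int m) (rho (I (m + n)) v)"
  by (simp add: kd_def act_scaled_bv)

subsection \<open>Conditions (a)--(d) in terms of basis elements\<close>

definition annihilated_from :: "int \<Rightarrow> 'v \<Rightarrow> bool" where
  "annihilated_from s v \<longleftrightarrow> (\<forall>g. inB A g \<longrightarrow> s \<le> deg g \<longrightarrow> rho g v = 0)"

definition stable_from :: "int \<Rightarrow> 'v set \<Rightarrow> bool" where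
  "stable_from s U \<longleftrightarrow> (\<forall>g u. inB A g \<longrightarrow> s \<le> deg g \<longrightarrow> u \<in> U \<longrightarrow> rho g u \<in> U)"

lemma upper_annihilates_iff:
  "(\<forall>a\<in>upper A s. act sc rho a v = 0) \<longleftrightarrow> annihilated_from s v"
proof
  assume "\<forall>a\<in>upper A s. act sc rho a v = 0"
  then show "annihilated_from s v"
    unfolding annihilated_from_def by (metis act_bv bv_in_upper)
qed (auto simp: annihilated_from_def upper_def elems_def intro!: act_eq_0)

lemma comp_annihilates_iff:
  "(\<forall>i\<ge>n. \<forall>a\<in>comp A i. act sc rho a v = 0) \<longleftrightarrow> annihilated_from n v"
proof
  assume "\<forall>i\<ge>n. \<forall>a\<in>comp A i. act sc rho a v = 0"
  then show "annihilated_from n v"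
    unfolding annihilated_from_def by (metis act_bv bv_in_comp)
qed (auto simp: annihilated_from_def comp_def elems_def intro!: act_eq_0)

lemma upper_stabilises_iff:
  assumes "subspace U"
  shows "(\<forall>a\<in>upper A s. \<forall>u\<in>U. act sc rho a u \<in> U) \<longleftrightarrow> stable_from s U"
proof
  assume "\<forall>a\<in>upper A s. \<forall>u\<in>U. act sc rho a u \<in> U"
  then show "stable_from s U"
    unfolding stable_from_def by (metis act_bv bv_in_upper)
qed (auto simp: stable_from_def upper_def elems_def intro!: act_in_subspace[OF assms])

lemma condA_iff: "condA A sc rho \<longleftrightarrow> (\<forall>v. \<exists>n>0. annihilated_from n v)"
  by (simp add: condA_def comp_annihilates_iff)

lemma condB_iff: "condB A sc rho \<longleftrightarrow> (\<exists>v s. v \<noteq> 0 \<and> s \<ge> 1 \<and> annihilated_from s v)"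
  by (simp add: condB_def upper_annihilates_iff)

lemma condC_iff:
  "condC A sc rho \<longleftrightarrow> (\<exists>k\<ge>1. \<forall>v. \<exists>B. finite B \<and> v \<in> span B \<and> stable_from k (span B))"
proof -
  have "(\<exists>U. subspace U \<and> (\<exists>B. finite B \<and> U = span B) \<and> v \<in> U \<and>
          (\<forall>a\<in>upper A k. \<forall>u\<in>U. act sc rho a u \<in> U))
      \<longleftrightarrow> (\<exists>B. finite B \<and> v \<in> span B \<and> stable_from k (span B))" for k v
    using upper_stabilises_iff[OF subspace_span] by blast
  then show ?thesis unfolding condC_def by presburger
qed


subsection \<open>Words in the basis applied to a vector\<close>

definition word_act :: "gen list \<Rightarrow> 'v \<Rightarrow> 'v" where
  "word_act m v = foldr rho m v"

definition neg_deg_sum :: "gen list \<Rightarrow> int" where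
  "neg_deg_sum m = (\<Sum>g\<leftarrow>m. max 0 (- deg g))"

definition deg_sum :: "gen list \<Rightarrow> int" where
  "deg_sum m = (\<Sum>g\<leftarrow>m. deg g)"

lemma word_act_simps [simp]:
  "word_act [] v = v" "word_act (g # m) v = rho g (word_act m v)"
  by (simp_all add: word_act_def)

lemma neg_deg_sum_simps [simp]:
  "neg_deg_sum [] = 0" "neg_deg_sum (g # m) = max 0 (- deg g) + neg_deg_sum m"
  by (simp_all add: neg_deg_sum_def)

lemma deg_sum_simps [simp]: "deg_sum [] = 0" "deg_sum (g # m) = deg g + deg_sum m"
  by (simp_all add: deg_sum_def)

lemma neg_deg_sum_nonneg: "neg_deg_sum m \<ge> 0"
  by (induct m) auto

lemma neg_deg_sum_ge: "g \<in> set m \<Longrightarrow> - deg g \<le> neg_deg_sum m"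
proof (induct m)
  case (Cons a m)
  then show ?case using neg_deg_sum_nonneg[of m] by auto
qed simp

text \<open>Moving a basis element of degree \<open>d\<close> past a letter of degree \<open>e\<close> leaves commutators of
  degree \<open>d + e\<close>; hence only the negative letters can lower the degree below the threshold.\<close>

lemma rho_word_act_eq_0:
  assumes "annihilated_from s v"
  shows "list_all (inB A) m \<Longrightarrow> inB A x \<Longrightarrow> s + neg_deg_sum m \<le> deg x \<Longrightarrow> rho x (word_act m v) = 0"
proof (induct m arbitrary: x)
  case Nil
  then show ?case using assms by (simp add: annihilated_from_def)
next
  case (Cons y m)
  have y: "inB A y" and m: "list_all (inB A) m" using Cons.prems by auto
  have "rho x (word_act (y # m) v) = rho y (rho x (word_act m v)) + act sc rho (bracket x y) (word_act m v)"
    using rho_commute[OF Cons.prems(2) y] by simp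
  also have "rho x (word_act m v) = 0"
    using Cons neg_deg_sum_nonneg[of m] by auto
  also have "act sc rho (bracket x y) (word_act m v) = 0"
  proof (rule act_eq_0)
    fix z assume "bracket x y z \<noteq> 0"
    then have "inB A z" "deg z = deg x + deg y"
      using bracket_support[OF Cons.prems(2) y] by auto
    then show "rho z (word_act m v) = 0"
      using Cons neg_deg_sum_nonneg[of m] by auto
  qed
  finally show ?case using rho_zero[OF y] by simp
qed

lemma span_words_eq_UNIV:
  assumes "simple_module A sc rho" "v \<noteq> 0"
  shows "span {word_act m v | m. list_all (inB A) m} = UNIV"
proof -
  let ?S = "span {word_act m v | m. list_all (inB A) m}"
  have "rho g (word_act m v) \<in> ?S" if "inB A g" "list_all (inB A) m" for g m
    using that by (intro span_base) (auto intro!: exI[of _ "g # m"])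
  then have "is_submodule A sc rho ?S"
    unfolding is_submodule_def by (auto intro: rho_in_span)
  moreover have "v \<in> ?S" by (rule span_base) (auto intro!: exI[of _ "[]"])
  ultimately show ?thesis using assms unfolding simple_module_def by auto
qed

lemma annihilated_from_mono: "annihilated_from s v \<Longrightarrow> s \<le> t \<Longrightarrow> annihilated_from t v"
  by (auto simp: annihilated_from_def)

lemma condB_imp_condA:
  assumes simple: "simple_module A sc rho" and "condB A sc rho"
  shows "condA A sc rho"
proof -
  obtain v0 s where v0: "v0 \<noteq> 0" "annihilated_from s v0"
    using \<open>condB A sc rho\<close> by (auto simp: condB_iff)
  have "\<exists>n>0. annihilated_from n w" for w
  proof -
    have "w \<in> span {word_act m v0 | m. list_all (inB A) m}"
      using span_words_eq_UNIV[OF simple v0(1)] by auto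
    then show ?thesis
    proof (induct rule: span_induct_alt)
      case base
      show ?case by (auto simp: annihilated_from_def rho_zero intro: exI[of _ 1])
    next
      case (step c x y)
      then obtain m n where m: "x = word_act m v0" "list_all (inB A) m"
        and n: "n > 0" "annihilated_from n y" by auto
      have "annihilated_from (s + neg_deg_sum m) x"
        using rho_word_act_eq_0[OF v0(2) m(2)] m(1) by (auto simp: annihilated_from_def)
      then show ?case
        using n annihilated_from_mono[of _ _ "max n (s + neg_deg_sum m)"]
        by (intro exI[of _ "max n (s + neg_deg_sum m)"])
           (auto simp: annihilated_from_def rho_add rho_scale)
    qed
  qed
  then show ?thesis by (simp add: condA_iff)
qed

lemma condA_imp_condB:
  assumes "simple_module A sc rho" "condA A sc rho"
  shows "condB A sc rho"
proof -
  obtain v0 :: 'v where "v0 \<noteq> 0" using assms(1) unfolding simple_module_def by auto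
  moreover obtain n where "n > 0" "annihilated_from n v0" using assms(2) by (auto simp: condA_iff)
  ultimately show ?thesis unfolding condB_iff by (intro exI[of _ v0] exI[of _ n]) auto
qed

text \<open>A shortest product \<open>a\<^sub>1 \<cdots> a\<^sub>r v\<^sub>0\<close> that does not vanish is annihilated by \<open>L\<^sup>(\<^sup>m\<^sup>)\<close>.\<close>

lemma condD_imp_condB:
  assumes "simple_module A sc rho" "condD A sc rho"
  shows "condB A sc rho"
proof -
  let ?prod = "\<lambda>as v. foldr (\<lambda>a w. act sc rho a w) as v"
  obtain v0 :: 'v where v0: "v0 \<noteq> 0" using assms(1) unfolding simple_module_def by auto
  obtain m n where m: "m \<ge> 1"
    and n: "\<forall>as. length as = n \<and> set as \<subseteq> upper A m \<longrightarrow> ?prod as v0 = 0"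
    using assms(2) unfolding condD_def by blast
  define P where "P k \<longleftrightarrow> (\<forall>as. length as = k \<and> set as \<subseteq> upper A m \<longrightarrow> ?prod as v0 = 0)" for k
  define k where "k = (LEAST k. P k)"
  have Pk: "P k" unfolding k_def using n by (intro LeastI[of P n]) (simp add: P_def)
  have "\<not> P 0" unfolding P_def using v0 by auto
  then have "k > 0" using Pk by (cases k) auto
  then have "\<not> P (k - 1)" unfolding k_def by (metis Least_le diff_less less_one not_le k_def)
  then obtain as where as: "length as = k - 1" "set as \<subseteq> upper A m" "?prod as v0 \<noteq> 0"
    unfolding P_def by auto
  have "act sc rho a (?prod as v0) = 0" if "a \<in> upper A m" for a
  proof -
    have "length (a # as) = k" "set (a # as) \<subseteq> upper A m" using as \<open>k > 0\<close> that by auto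
    then show ?thesis using Pk unfolding P_def by fastforce
  qed
  then show ?thesis
    unfolding condB_def using as(3) m by blast
qed

subsection \<open>From (b) to (c) and (d)\<close>

definition bounded_words :: "nat \<Rightarrow> int \<Rightarrow> int \<Rightarrow> gen list set" where
  "bounded_words R b hi =
     {m. length m \<le> R \<and> list_all (inB A) m \<and> (\<forall>g\<in>set m. - b \<le> deg g \<and> deg g \<le> hi)}"

lemma bounded_words_mono:
  "R \<le> R' \<Longrightarrow> b \<le> b' \<Longrightarrow> hi \<le> hi' \<Longrightarrow> bounded_words R b hi \<subseteq> bounded_words R' b' hi'"
  unfolding bounded_words_def by (force simp: list_all_iff)

lemma finite_bounded_words: "finite (bounded_words R b hi)"
proof -
  let ?X = "D ` {-b..hi} \<union> I ` {-b..hi} \<union> {Z1, Z2, Z3}"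
  have "set m \<subseteq> ?X" if "\<forall>g\<in>set m. - b \<le> deg g \<and> deg g \<le> hi" for m
  proof
    fix g assume "g \<in> set m"
    then have "- b \<le> deg g \<and> deg g \<le> hi" using that by blast
    then show "g \<in> ?X" by (cases g) auto
  qed
  then have "bounded_words R b hi \<subseteq> {m. set m \<subseteq> ?X \<and> length m \<le> R}"
    unfolding bounded_words_def by auto
  moreover have "finite {m. set m \<subseteq> ?X \<and> length m \<le> R}"
    by (rule finite_lists_length_le) auto
  ultimately show ?thesis by (rule finite_subset)
qed

lemma neg_deg_sum_le: "b \<ge> 0 \<Longrightarrow> \<forall>g\<in>set m. - b \<le> deg g \<Longrightarrow> neg_deg_sum m \<le> int (length m) * b"
  by (induct m) (auto simp: algebra_simps)

lemma deg_sum_bounds: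
  "\<forall>g\<in>set m. - b \<le> deg g \<and> deg g \<le> hi \<Longrightarrow> - (int (length m) * b) \<le> deg_sum m \<and> deg_sum m \<le> int (length m) * hi"
  by (induct m) (auto simp: algebra_simps)

text \<open>The bound on \<open>hi\<close> ensures that a commutator of degree above \<open>hi\<close> kills the rest of the
  word, so only bounded words occur.\<close>

lemma rho_word_act_in_span_higher:
  assumes v: "annihilated_from s v" and "s \<ge> 1" "b \<ge> 0" and hi: "s + int R * b \<le> hi"
  shows "m \<in> bounded_words R b hi \<Longrightarrow> inB A x \<Longrightarrow> s \<le> deg x \<Longrightarrow>
    rho x (word_act m v) \<in> span ((\<lambda>m'. word_act m' v) `
      {m' \<in> bounded_words R b hi. length m' = length m \<and> deg_sum m < deg_sum m'})"
proof (induct m)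
  case Nil
  then show ?case using v by (simp add: annihilated_from_def span_zero)
next
  case (Cons y m)
  let ?S = "\<lambda>m. span ((\<lambda>m'. word_act m' v) `
      {m' \<in> bounded_words R b hi. length m' = length m \<and> deg_sum m < deg_sum m'})"
  have m: "m \<in> bounded_words R b hi" and y: "inB A y" "- b \<le> deg y" "deg y \<le> hi"
    and len: "length (y # m) \<le> R"
    using Cons.prems(1) unfolding bounded_words_def by auto
  have "rho y (rho x (word_act m v)) \<in> ?S (y # m)"
  proof (rule rho_in_span[OF y(1) Cons.hyps[OF m Cons.prems(2,3)]])
    fix u assume "u \<in> (\<lambda>m'. word_act m' v) `
      {m' \<in> bounded_words R b hi. length m' = length m \<and> deg_sum m < deg_sum m'}"
    then obtain m' where "u = word_act m' v" "m' \<in> bounded_words R b hi"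
      "length m' = length m" "deg_sum m < deg_sum m'" by auto
    moreover have "y # m' \<in> bounded_words R b hi"
      using calculation y len unfolding bounded_words_def by auto
    ultimately show "rho y u \<in> ?S (y # m)"
      by (intro span_base image_eqI[of _ _ "y # m'"]) auto
  qed
  moreover have "act sc rho (bracket x y) (word_act m v) \<in> ?S (y # m)"
  proof (rule act_in_subspace[OF subspace_span])
    fix z assume "bracket x y z \<noteq> 0"
    then have z: "inB A z" "deg z = deg x + deg y"
      using bracket_support[OF Cons.prems(2) y(1)] by auto
    show "rho z (word_act m v) \<in> ?S (y # m)"
    proof (cases "deg z \<le> hi")
      case True
      then have "z # m \<in> bounded_words R b hi"
        using z y len m Cons.prems(3) \<open>s \<ge> 1\<close> unfolding bounded_words_def by auto
      then show ?thesis
        using z Cons.prems(3) \<open>s \<ge> 1\<close> by (intro span_base image_eqI[of _ _ "z # m"]) auto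
    next
      case False
      have "neg_deg_sum m \<le> int (length m) * b"
        using m \<open>b \<ge> 0\<close> by (intro neg_deg_sum_le) (auto simp: bounded_words_def)
      also have "\<dots> \<le> int R * b"
        using len \<open>b \<ge> 0\<close> by (intro mult_right_mono) auto
      finally have "rho z (word_act m v) = 0"
        using False hi rho_word_act_eq_0[OF v _ z(1)] m by (auto simp: bounded_words_def)
      then show ?thesis by (simp add: span_zero)
    qed
  qed
  ultimately show ?case
    using rho_commute[OF Cons.prems(2) y(1)] by (simp add: span_add)
qed

lemma ex_bounded_words_span:
  assumes "simple_module A sc rho" "v0 \<noteq> 0"
  shows "\<exists>R b hi. b \<ge> 0 \<and> v \<in> span ((\<lambda>m. word_act m v0) ` bounded_words R b hi)"
proof -
  have "v \<in> span {word_act m v0 | m. list_all (inB A) m}"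
    using span_words_eq_UNIV[OF assms] by auto
  then show ?thesis
  proof (induct rule: span_induct_alt)
    case base
    show ?case by (auto simp: span_zero)
  next
    case (step c x y)
    then obtain m R b hi where m: "x = word_act m v0" "list_all (inB A) m"
      and y: "b \<ge> 0" "y \<in> span ((\<lambda>m. word_act m v0) ` bounded_words R b hi)"
      by auto
    define R' b' hi' where "R' = max R (length m)" and "b' = max b (neg_deg_sum m)"
      and "hi' = Max (insert hi (deg ` set m))"
    let ?U = "span ((\<lambda>m. word_act m v0) ` bounded_words R' b' hi')"
    have "bounded_words R b hi \<subseteq> bounded_words R' b' hi'"
      unfolding R'_def b'_def hi'_def by (intro bounded_words_mono) auto
    then have "y \<in> ?U"
      using y(2) span_mono[OF image_mono] by blast
    moreover have "m \<in> bounded_words R' b' hi'"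
      using m neg_deg_sum_ge unfolding bounded_words_def R'_def b'_def hi'_def
      by (force simp: list_all_iff)
    then have "x \<in> ?U" using m by (intro span_base) auto
    moreover have "b' \<ge> 0" using y(1) unfolding b'_def by auto
    ultimately show ?case
      by (intro exI[of _ R'] exI[of _ b'] exI[of _ hi']) (auto intro: span_add span_scale)
  qed
qed

lemma in_span_bounded_words:
  assumes "simple_module A sc rho" "v0 \<noteq> 0"
  obtains R b hi where "b \<ge> 0" "s + int R * b \<le> hi"
    "v \<in> span ((\<lambda>m. word_act m v0) ` bounded_words R b hi)"
proof -
  obtain R b hi where "b \<ge> 0" "v \<in> span ((\<lambda>m. word_act m v0) ` bounded_words R b hi)"
    using ex_bounded_words_span[OF assms] by blast
  moreover have "span ((\<lambda>m. word_act m v0) ` bounded_words R b hi)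
      \<subseteq> span ((\<lambda>m. word_act m v0) ` bounded_words R b (max hi (s + int R * b)))"
    by (intro span_mono image_mono bounded_words_mono) auto
  ultimately show ?thesis by (intro that[of b R "max hi (s + int R * b)"]) auto
qed

definition words_span_deg_ge :: "'v \<Rightarrow> nat \<Rightarrow> int \<Rightarrow> int \<Rightarrow> int \<Rightarrow> 'v set" where
  "words_span_deg_ge v R b hi d = span ((\<lambda>m. word_act m v) ` {m \<in> bounded_words R b hi. d \<le> deg_sum m})"

lemma words_span_deg_ge_antimono:
  "d \<le> d' \<Longrightarrow> words_span_deg_ge v R b hi d' \<subseteq> words_span_deg_ge v R b hi d"
  unfolding words_span_deg_ge_def by (intro span_mono image_mono) auto

lemma span_bounded_words_eq_deg_ge:
  assumes "b \<ge> 0"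
  shows "span ((\<lambda>m. word_act m v) ` bounded_words R b hi) = words_span_deg_ge v R b hi (- (int R * b))"
proof -
  have "- (int R * b) \<le> deg_sum m" if "m \<in> bounded_words R b hi" for m
  proof -
    have "int (length m) * b \<le> int R * b"
      using that assms by (intro mult_right_mono) (auto simp: bounded_words_def)
    then show ?thesis using deg_sum_bounds[of m b hi] that by (auto simp: bounded_words_def)
  qed
  then show ?thesis unfolding words_span_deg_ge_def by (intro arg_cong[where f = span]) auto
qed

lemma words_span_deg_ge_eq_0:
  assumes "hi \<ge> 0"
  shows "words_span_deg_ge v R b hi (int R * hi + 1) = {0}"
proof -
  have "deg_sum m \<le> int R * hi" if "m \<in> bounded_words R b hi" for m
  proof -
    have "int (length m) * hi \<le> int R * hi"
      using that assms by (intro mult_right_mono) (auto simp: bounded_words_def)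
    then show ?thesis using deg_sum_bounds[of m b hi] that by (auto simp: bounded_words_def)
  qed
  then have "{m \<in> bounded_words R b hi. int R * hi + 1 \<le> deg_sum m} = {}"
    by fastforce
  then show ?thesis unfolding words_span_deg_ge_def by (metis image_empty span_empty)
qed

context
  fixes v s R b hi
  assumes v: "annihilated_from s v" and "s \<ge> 1" "b \<ge> 0" "s + int R * b \<le> hi"
begin

lemma rho_words_span_deg_ge:
  assumes g: "inB A g" "s \<le> deg g" and u: "u \<in> words_span_deg_ge v R b hi d"
  shows "rho g u \<in> words_span_deg_ge v R b hi (d + 1)"
  unfolding words_span_deg_ge_def
proof (rule rho_in_span[OF g(1) u[unfolded words_span_deg_ge_def]])
  fix x assume "x \<in> (\<lambda>m. word_act m v) ` {m \<in> bounded_words R b hi. d \<le> deg_sum m}"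
  then obtain m where m: "x = word_act m v" "m \<in> bounded_words R b hi" "d \<le> deg_sum m"
    by auto
  then have "rho g x \<in> span ((\<lambda>m'. word_act m' v) `
      {m' \<in> bounded_words R b hi. length m' = length m \<and> deg_sum m < deg_sum m'})"
    using rho_word_act_in_span_higher[OF v \<open>s \<ge> 1\<close> \<open>b \<ge> 0\<close> \<open>s + int R * b \<le> hi\<close> m(2) g] by simp
  also have "\<dots> \<subseteq> span ((\<lambda>m. word_act m v) ` {m \<in> bounded_words R b hi. d + 1 \<le> deg_sum m})"
    using m(3) by (intro span_mono image_mono) auto
  finally show "rho g x \<in> span ((\<lambda>m. word_act m v) ` {m \<in> bounded_words R b hi. d + 1 \<le> deg_sum m})" .
qed

lemma upper_product_words_span_deg_ge:
  "u \<in> words_span_deg_ge v R b hi d \<Longrightarrow> set as \<subseteq> upper A s \<Longrightarrow>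
    foldr (\<lambda>a w. act sc rho a w) as u \<in> words_span_deg_ge v R b hi (d + int (length as))"
proof (induct as)
  case (Cons a as)
  then have "foldr (\<lambda>a w. act sc rho a w) as u \<in> words_span_deg_ge v R b hi (d + int (length as))"
    by simp
  then have "act sc rho a (foldr (\<lambda>a w. act sc rho a w) as u)
      \<in> words_span_deg_ge v R b hi (d + int (length as) + 1)"
    using Cons.prems(2) unfolding upper_def elems_def
    by (intro act_in_subspace rho_words_span_deg_ge) (auto simp: words_span_deg_ge_def)
  then show ?case by (simp add: ac_simps)
qed simp

end

lemma condB_imp_condC:
  assumes simple: "simple_module A sc rho" and "condB A sc rho"
  shows "condC A sc rho"
proof -
  obtain v0 s where v0: "v0 \<noteq> 0" "s \<ge> 1" "annihilated_from s v0"
    using \<open>condB A sc rho\<close> by (auto simp: condB_iff)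
  have "\<exists>B. finite B \<and> v \<in> span B \<and> stable_from s (span B)" for v
  proof -
    obtain R b hi where b: "b \<ge> 0" "s + int R * b \<le> hi"
      and v: "v \<in> span ((\<lambda>m. word_act m v0) ` bounded_words R b hi)"
      by (rule in_span_bounded_words[OF simple v0(1)])
    let ?F = "words_span_deg_ge v0 R b hi"
    have "?F (- (int R * b) + 1) \<subseteq> ?F (- (int R * b))"
      by (rule words_span_deg_ge_antimono) simp
    then have "rho g u \<in> ?F (- (int R * b))"
      if "inB A g" "s \<le> deg g" "u \<in> ?F (- (int R * b))" for g u
      using rho_words_span_deg_ge[OF v0(3,2) b that] by blast
    then have "stable_from s (span ((\<lambda>m. word_act m v0) ` bounded_words R b hi))"
      unfolding stable_from_def span_bounded_words_eq_deg_ge[OF b(1)] by blast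
    then show ?thesis using v by (intro exI[of _ "(\<lambda>m. word_act m v0) ` bounded_words R b hi"])
      (simp add: finite_bounded_words)
  qed
  then show ?thesis unfolding condC_iff using v0(2) by blast
qed

text \<open>Each factor from \<open>L\<^sup>(\<^sup>s\<^sup>)\<close> raises the total degree of the bounded words, which ranges
  over a bounded interval.\<close>

lemma condB_imp_condD:
  assumes simple: "simple_module A sc rho" and "condB A sc rho"
  shows "condD A sc rho"
proof -
  obtain v0 s where v0: "v0 \<noteq> 0" "s \<ge> 1" "annihilated_from s v0"
    using \<open>condB A sc rho\<close> by (auto simp: condB_iff)
  have "\<exists>n\<ge>1. \<forall>as. length as = n \<and> set as \<subseteq> upper A s \<longrightarrow> foldr (\<lambda>a w. act sc rho a w) as v = 0"
    for v
  proof -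
    obtain R b hi where b: "b \<ge> 0" "s + int R * b \<le> hi"
      and v: "v \<in> span ((\<lambda>m. word_act m v0) ` bounded_words R b hi)"
      by (rule in_span_bounded_words[OF simple v0(1)])
    have "int R * b \<ge> 0" using b by simp
    then have "hi \<ge> 0" using b v0(2) by linarith
    then have "int R * hi \<ge> 0" by simp
    define n where "n = nat (int R * hi + int R * b + 1)"
    have n: "- (int R * b) + int n = int R * hi + 1" "n \<ge> 1"
      using \<open>int R * b \<ge> 0\<close> \<open>int R * hi \<ge> 0\<close> unfolding n_def by simp_all
    show ?thesis
    proof (intro exI[of _ n] conjI allI impI)
      fix as assume as: "length as = n \<and> set as \<subseteq> upper A s"
      have "v \<in> words_span_deg_ge v0 R b hi (- (int R * b))"
        using v unfolding span_bounded_words_eq_deg_ge[OF b(1)] .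
      then have "foldr (\<lambda>a w. act sc rho a w) as v \<in> words_span_deg_ge v0 R b hi (int R * hi + 1)"
        using upper_product_words_span_deg_ge[OF v0(3,2) b] as n(1) by fastforce
      then show "foldr (\<lambda>a w. act sc rho a w) as v = 0"
        using words_span_deg_ge_eq_0[OF \<open>hi \<ge> 0\<close>] by simp
    qed (rule n(2))
  qed
  then show ?thesis using v0(2) unfolding condD_def by blast
qed

end

subsection \<open>Polynomial ideals stable under a derivation\<close>

lemma monom_1_dvd_mono: "monom 1 n dvd p \<Longrightarrow> m \<le> n \<Longrightarrow> monom 1 m dvd p"
  by (simp add: monom_1_dvd_iff')

lemma monom_1_dvd_monom: "n \<le> m \<Longrightarrow> monom 1 n dvd monom c m"
  by (simp add: monom_1_dvd_iff')

lemma monom_1_dvd_mult: "monom 1 a dvd p \<Longrightarrow> monom 1 b dvd q \<Longrightarrow> monom 1 (a + b) dvd p * q"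
  by (metis mult_dvd_mono mult_monom mult_1)

lemma monom_1_dvd_pderiv: "monom 1 (Suc n) dvd p \<Longrightarrow> monom 1 n dvd pderiv p"
  by (simp add: monom_1_dvd_iff' coeff_pderiv)

lemma sum_monoms_above:
  "monom 1 n dvd q \<Longrightarrow> q = (\<Sum>i\<in>{i. i \<le> degree q \<and> n \<le> i}. monom (coeff q i) i)"
proof -
  assume "monom 1 n dvd q"
  then have "(\<Sum>i\<le>degree q. monom (coeff q i) i) = (\<Sum>i\<in>{i. i \<le> degree q \<and> n \<le> i}. monom (coeff q i) i)"
    unfolding monom_1_dvd_iff' by (intro sum.mono_neutral_right) (auto simp: not_le[symmetric])
  then show ?thesis by (simp add: poly_as_sum_of_monoms)
qed

lemma biadditive_eq_0_if_monoms:
  fixes \<Phi> :: "'a::comm_ring_1 poly \<Rightarrow> 'a poly \<Rightarrow> 'b::ab_group_add"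
  assumes add_left: "\<And>q1 q2 p. \<Phi> (q1 + q2) p = \<Phi> q1 p + \<Phi> q2 p"
    and add_right: "\<And>q p1 p2. \<Phi> q (p1 + p2) = \<Phi> q p1 + \<Phi> q p2"
    and monoms: "\<And>a b n m. n0 \<le> n \<Longrightarrow> m0 \<le> m \<Longrightarrow> \<Phi> (monom b n) (monom a m) = 0"
    and "monom 1 n0 dvd q" "monom 1 m0 dvd p"
  shows "\<Phi> q p = 0"
proof -
  have zero_left: "\<Phi> 0 p = 0" for p using add_left[of 0 0 p] by simp
  have zero_right: "\<Phi> q 0 = 0" for q using add_right[of q 0 0] by simp
  have monom_left: "\<Phi> (monom b n) p = 0" if "n0 \<le> n" for b n
  proof -
    have "\<Phi> (monom b n) p = \<Phi> (monom b n) (\<Sum>i\<in>{i. i \<le> degree p \<and> m0 \<le> i}. monom (coeff p i) i)"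
      using sum_monoms_above[OF \<open>monom 1 m0 dvd p\<close>] by simp
    also have "\<dots> = (\<Sum>i\<in>{i. i \<le> degree p \<and> m0 \<le> i}. \<Phi> (monom b n) (monom (coeff p i) i))"
      by (simp only: sum_comp_morphism[where h = "\<Phi> (monom b n)", OF zero_right add_right, symmetric]
          o_def)
    also have "\<dots> = 0" using that monoms by (intro sum.neutral) auto
    finally show ?thesis .
  qed
  have "\<Phi> q p = \<Phi> (\<Sum>i\<in>{i. i \<le> degree q \<and> n0 \<le> i}. monom (coeff q i) i) p"
    using sum_monoms_above[OF \<open>monom 1 n0 dvd q\<close>] by simp
  also have "\<dots> = (\<Sum>i\<in>{i. i \<le> degree q \<and> n0 \<le> i}. \<Phi> (monom (coeff q i) i) p)"
    by (simp only: sum_comp_morphism[where h = "\<lambda>q. \<Phi> q p", OF zero_left add_left, symmetric]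
        o_def)
  also have "\<dots> = 0" using monom_left by (intro sum.neutral) auto
  finally show ?thesis .
qed

text \<open>An ideal of \<open>K[t]\<close> that is stable under the derivation \<open>t\<^sup>c d/dt\<close> (\<open>c \<ge> 1\<close>) and is
  nonzero contains a power of \<open>t\<close>: writing an element as \<open>t\<^sup>e R\<close>, the identity
  \<open>t\<^sup>c (t\<^sup>e R)' = t\<^sup>c\<^sup>+\<^sup>e R' + e t\<^sup>c\<^sup>-\<^sup>1 t\<^sup>e R\<close> produces \<open>t\<^sup>c\<^sup>+\<^sup>e R'\<close>, of lower degree in \<open>R\<close>.\<close>

lemma pderiv_stable_ideal_contains_monom:
  fixes J :: "'a::field_char_0 poly set"
  assumes "c \<ge> 1"
    and add: "\<And>P Q. P \<in> J \<Longrightarrow> Q \<in> J \<Longrightarrow> P + Q \<in> J"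
    and mult: "\<And>P R. P \<in> J \<Longrightarrow> P * R \<in> J"
    and deriv: "\<And>P. P \<in> J \<Longrightarrow> monom 1 c * pderiv P \<in> J"
    and "P0 \<in> J" "P0 \<noteq> 0"
  shows "\<exists>M. monom 1 M \<in> J"
proof -
  have "\<exists>M. monom 1 M \<in> J" if "degree R = n" "R \<noteq> 0" "monom 1 e * R \<in> J" for n R e
    using that
  proof (induct n arbitrary: R e rule: less_induct)
    case (less n R e)
    show ?case
    proof (cases "degree R = 0")
      case True
      then obtain r where R: "R = [:r:]" "r \<noteq> 0" using less.prems by (metis degree_eq_zeroE pCons_0_0)
      then have "monom 1 e * R * [:1/r:] = monom 1 e" by (simp add: mult.assoc)
      then show ?thesis using mult[OF less.prems(3)] by metis
    next
      case False
      let ?P = "monom 1 e * R"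
      have "monom 1 c * pderiv ?P = monom 1 (c + e) * pderiv R + ?P * monom (of_nat e) (c - 1)"
        using \<open>c \<ge> 1\<close>
        by (cases e) (simp_all add: pderiv_mult pderiv_monom mult_monom algebra_simps)
      then have "monom 1 (c + e) * pderiv R = monom 1 c * pderiv ?P + ?P * (monom (of_nat e) (c - 1) * [:-1:])"
        by (simp add: algebra_simps)
      also have "\<dots> \<in> J" using add deriv mult less.prems(3) by blast
      finally have "monom 1 (c + e) * pderiv R \<in> J" .
      moreover have "pderiv R \<noteq> 0" "degree (pderiv R) < n"
        using False less.prems(1) by (simp_all add: pderiv_eq_0_iff degree_pderiv)
      ultimately show ?thesis using less.hyps by blast
    qed
  qed
  moreover have "monom 1 0 * P0 = P0" by (simp add: monom_0 one_pCons[symmetric])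
  ultimately show ?thesis using assms(5,6) by metis
qed

text \<open>The largest ideal contained in \<open>K\<close>, namely \<open>{P. \<forall>q. P * q \<in> K}\<close>, is stable under
  \<open>t\<^sup>c d/dt\<close> as soon as \<open>K\<close> is stable under \<open>p \<mapsto> t\<^sup>c p' + r p\<close>.\<close>

lemma exists_monom_ideal_within:
  fixes K :: "'a::field_char_0 poly set"
  assumes "c \<ge> 1"
    and diff: "\<And>p q. p \<in> K \<Longrightarrow> q \<in> K \<Longrightarrow> p - q \<in> K"
    and deriv: "\<And>p. p \<in> K \<Longrightarrow> monom 1 c * pderiv p + r * p \<in> K"
    and "P0 \<noteq> 0" "\<And>q. P0 * q \<in> K"
  shows "\<exists>M. \<forall>q. monom 1 M * q \<in> K"
proof -
  define J where "J = {P. \<forall>q. P * q \<in> K}"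
  have "0 \<in> K" using assms(5)[of 0] by simp
  then have add: "p + q \<in> K" if "p \<in> K" "q \<in> K" for p q
    using diff[OF that(1) diff[OF \<open>0 \<in> K\<close> that(2)]] by simp
  have "monom 1 c * pderiv P \<in> J" if "P \<in> J" for P
    unfolding J_def
  proof (intro CollectI allI)
    fix q
    have "monom 1 c * pderiv (P * q) + r * (P * q) - P * (monom 1 c * pderiv q + r * q) \<in> K"
      using that unfolding J_def by (intro diff deriv) auto
    then show "monom 1 c * pderiv P * q \<in> K"
      by (simp add: pderiv_mult algebra_simps)
  qed
  moreover have "P0 \<in> J" using assms(5) unfolding J_def by blast
  ultimately have "\<exists>M. monom 1 M \<in> J"
    using pderiv_stable_ideal_contains_monom[OF \<open>c \<ge> 1\<close>, of J] \<open>P0 \<noteq> 0\<close> add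
    unfolding J_def by (simp add: distrib_right mult.assoc)
  then show ?thesis unfolding J_def by blast
qed

subsection \<open>From (c) to (b)\<close>

lemma (in vector_space) sequence_in_finite_span_dependent:
  fixes F :: "nat \<Rightarrow> 'b"
  assumes "finite E" "\<And>j. F j \<in> span E"
  shows "\<exists>N c. (\<exists>j\<le>N. c j \<noteq> 0) \<and> (\<Sum>j\<le>N. scale (c j) (F j)) = 0"
proof (cases "inj_on F {..card E}")
  case True
  have "\<not> independent (F ` {..card E})"
  proof
    assume "independent (F ` {..card E})"
    then have "card (F ` {..card E}) \<le> card E"
      using independent_span_bound[OF \<open>finite E\<close>] assms(2) by auto
    then show False using True by (simp add: card_image)
  qed
  then obtain u where u: "\<exists>v\<in>F ` {..card E}. u v \<noteq> 0" "(\<Sum>v\<in>F ` {..card E}. scale (u v) v) = 0"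
    using dependent_finite[of "F ` {..card E}"] by auto
  then have "(\<Sum>j\<le>card E. scale (u (F j)) (F j)) = 0"
    using sum.reindex[OF True, of "\<lambda>v. scale (u v) v"] by simp
  then show ?thesis using u(1) by (intro exI[of _ "card E"] exI[of _ "\<lambda>j. u (F j)"]) auto
next
  case False
  then obtain i j where ij: "i \<le> card E" "j \<le> card E" "i \<noteq> j" "F i = F j"
    unfolding inj_on_def by auto
  define c :: "nat \<Rightarrow> 'a" where "c l = (if l = i then 1 else if l = j then -1 else 0)" for l
  have "scale (c l) (F l) = (if l = i then F l else 0) - (if l = j then F l else 0)" for l
    using ij(3) by (auto simp: c_def)
  then have "(\<Sum>l\<le>card E. scale (c l) (F l)) = 0"
    using ij by (simp add: sum_subtractf)
  moreover have "c i \<noteq> 0" by (simp add: c_def)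
  ultimately show ?thesis using ij(1) by (intro exI[of _ "card E"] exI[of _ c]) auto
qed

text \<open>Infinitely many operators preserving the span of a finite set \<open>B\<close> are linearly
  dependent on it, since their restrictions to \<open>B\<close> lie in the span of the \<open>card B\<^sup>2\<close> functions
  supported at a point of \<open>B\<close> with value in \<open>B\<close>.\<close>

lemma operators_dependent_on_finite_span:
  fixes sc :: "'a::field \<Rightarrow> 'v::ab_group_add \<Rightarrow> 'v" and T :: "nat \<Rightarrow> 'v \<Rightarrow> 'v"
  assumes "vector_space sc" "finite B" "\<And>j b. b \<in> B \<Longrightarrow> T j b \<in> module.span sc B"
  shows "\<exists>N c. (\<exists>j\<le>N. c j \<noteq> 0) \<and> (\<forall>b\<in>B. (\<Sum>j\<le>N. sc (c j) (T j b)) = 0)"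
proof -
  interpret V: vector_space sc by fact
  define fs :: "'a \<Rightarrow> ('v \<Rightarrow> 'v) \<Rightarrow> ('v \<Rightarrow> 'v)" where "fs c f = (\<lambda>x. sc c (f x))" for c f
  interpret F: vector_space fs
    by unfold_locales (auto simp: fs_def fun_eq_iff V.scale_right_distrib V.scale_left_distrib)
  define e where "e b u = (\<lambda>x. if x = b then u else 0)" for b u :: 'v
  define E where "E = (\<lambda>(b, u). e b u) ` (B \<times> B)"
  have e_span: "e b u \<in> F.span E" if "b \<in> B" "u \<in> V.span B" for b u
    using that(2)
  proof (induct rule: V.span_induct_alt)
    case base
    have "e b 0 = 0" by (auto simp: e_def)
    then show ?case by (metis F.span_zero)
  next
    case (step c x y)
    have "e b (sc c x + y) = fs c (e b x) + e b y" by (auto simp: e_def fs_def)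
    moreover have "e b x \<in> E" using step that unfolding E_def by auto
    ultimately show ?case using step by (metis F.span_add F.span_scale F.span_base)
  qed
  have sum_apply: "(\<Sum>i\<in>S. f i) x = (\<Sum>i\<in>S. f i x)" for S and f :: "_ \<Rightarrow> 'v \<Rightarrow> 'v" and x
    by (induct S rule: infinite_finite_induct) auto
  define F where "F j = (\<lambda>x. if x \<in> B then T j x else 0)" for j
  have "F j = (\<Sum>b\<in>B. e b (T j b))" for j
    using \<open>finite B\<close> by (auto simp: F_def e_def fun_eq_iff sum_apply)
  then have "F j \<in> F.span E" for j
    using e_span assms(3) by (auto intro: F.span_sum)
  moreover have "finite E" unfolding E_def using \<open>finite B\<close> by auto
  ultimately obtain N c where c: "\<exists>j\<le>N. c j \<noteq> 0" "(\<Sum>j\<le>N. fs (c j) (F j)) = 0"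
    using F.sequence_in_finite_span_dependent by blast
  have "(\<Sum>j\<le>N. sc (c j) (T j b)) = (\<Sum>j\<le>N. fs (c j) (F j)) b" if "b \<in> B" for b
    using that by (simp add: sum_apply fs_def F_def)
  then show ?thesis using c by (intro exI[of _ N] exI[of _ c]) auto
qed

text \<open>A polynomial \<open>p\<close> acts as \<open>p(t) d/dt\<close> via the basis \<open>tD\<close> and as multiplication by
  \<open>p(t)\<close> via \<open>tI\<close>.\<close>

abbreviation tD :: "nat \<Rightarrow> gen" where "tD j \<equiv> D (int j - 1)"
abbreviation tI :: "nat \<Rightarrow> gen" where "tI j \<equiv> I (int j)"

lemma inB_tD: "inB A (tD j)"
  by (rule inB_D) simp

context lie_module
begin

definition poly_act :: "(nat \<Rightarrow> gen) \<Rightarrow> complex poly \<Rightarrow> 'v \<Rightarrow> 'v" where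
  "poly_act f p u = (\<Sum>j\<le>degree p. sc (coeff p j) (rho (f j) u))"

lemma poly_act_upto: "degree p \<le> N \<Longrightarrow> poly_act f p u = (\<Sum>j\<le>N. sc (coeff p j) (rho (f j) u))"
  unfolding poly_act_def by (intro sum.mono_neutral_left) (auto simp: coeff_eq_0)

lemma poly_act_0: "poly_act f 0 u = 0"
  by (simp add: poly_act_def)

lemma poly_act_add: "poly_act f (p + q) u = poly_act f p u + poly_act f q u"
proof -
  let ?N = "max (degree p) (degree q)"
  have "degree (p + q) \<le> ?N" by (intro degree_add_le) auto
  then show ?thesis
    by (simp add: poly_act_upto[of _ ?N] poly_act_upto[of p ?N] poly_act_upto[of q ?N]
        scale_left_distrib sum.distrib)
qed

lemma poly_act_smult: "poly_act f (smult c p) u = sc c (poly_act f p u)"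
  by (simp add: poly_act_upto[of "smult c p" "degree p", OF degree_smult_le] poly_act_def scale_sum_right)

lemma poly_act_diff: "poly_act f (p - q) u = poly_act f p u - poly_act f q u"
  using poly_act_add[of f p "smult (-1) q" u] poly_act_smult[of f "-1" q u] by simp

lemma poly_act_monom: "poly_act f (monom a n) u = sc a (rho (f n) u)"
proof -
  have "poly_act f (monom a n) u = (\<Sum>j\<le>n. sc (coeff (monom a n) j) (rho (f j) u))"
    by (rule poly_act_upto) (simp add: degree_monom_le)
  also have "\<dots> = (\<Sum>j\<le>n. if j = n then sc a (rho (f n) u) else 0)"
    by (intro sum.cong) auto
  finally show ?thesis by simp
qed

lemma poly_act_module_hom: "(\<And>j. inB A (f j)) \<Longrightarrow> module_hom sc sc (poly_act f p)"
  by unfold_locales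
     (auto simp: poly_act_def rho_add rho_scale scale_right_distrib sum.distrib scale_sum_right mult.commute)

lemma poly_act_in_subspace:
  assumes "subspace U" "\<And>j. coeff p j \<noteq> 0 \<Longrightarrow> rho (f j) u \<in> U"
  shows "poly_act f p u \<in> U"
proof -
  have "sc (coeff p j) (rho (f j) u) \<in> U" for j
    using assms by (cases "coeff p j = 0") (auto intro: subspace_scale simp: subspace_0)
  then show ?thesis unfolding poly_act_def by (intro subspace_sum[OF assms(1)]) auto
qed

lemma poly_act_tD_in_stable:
  assumes "stable_from (int k) U" "subspace U" "monom 1 (k + 1) dvd q" "u \<in> U"
  shows "poly_act tD q u \<in> U"
proof (rule poly_act_in_subspace[OF assms(2)])
  fix j assume "coeff q j \<noteq> 0"
  then have "k + 1 \<le> j" using assms(3) unfolding monom_1_dvd_iff' by (meson not_le)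
  then show "rho (tD j) u \<in> U"
    using assms(1,4) inB_tD[of A j] unfolding stable_from_def by auto
qed

lemma poly_act_add_right:
  "(\<And>j. inB A (f j)) \<Longrightarrow> poly_act f p (x + y) = poly_act f p x + poly_act f p y"
  using module_hom.add[OF poly_act_module_hom] by blast

lemma poly_act_tD_commutator_monom:
  assumes "2 \<le> n" "2 \<le> m"
  shows "poly_act tD (monom b n * pderiv (monom a m) - pderiv (monom b n) * monom a m) u
    = poly_act tD (monom b n) (poly_act tD (monom a m) u) - poly_act tD (monom a m) (poly_act tD (monom b n) u)"
proof -
  have "monom b n * pderiv (monom a m) - pderiv (monom b n) * monom a m
      = monom (a * b * (of_nat m - of_nat n)) (n + m - 1)"
    using assms by (simp add: pderiv_monom mult_monom algebra_simps flip: diff_monom)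
  moreover have "rho (tD n) (rho (tD m) u) - rho (tD m) (rho (tD n) u)
      = sc (of_nat m - of_nat n) (rho (tD (n + m - 1)) u)"
    using rho_commute[OF inB_tD inB_tD, of n m u] act_bracket_D_D[of "int n - 1" "int m - 1" u] assms
    by (simp add: algebra_simps of_nat_diff)
  moreover have "poly_act tD (monom b n) (poly_act tD (monom a m) u)
      - poly_act tD (monom a m) (poly_act tD (monom b n) u)
      = sc (a * b) (rho (tD n) (rho (tD m) u) - rho (tD m) (rho (tD n) u))"
    by (simp add: poly_act_monom rho_scale[OF inB_tD] scale_right_diff_distrib mult.commute)
  ultimately show ?thesis by (simp add: poly_act_monom)
qed

text \<open>The commutator of \<open>p d/dt\<close> and \<open>q d/dt\<close> is \<open>(p q' - p' q) d/dt\<close>; the central term of the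
  bracket does not occur for polynomials vanishing to order 2, i.e.\ for \<open>d\<^sub>n\<close> with \<open>n \<ge> 1\<close>.\<close>

lemma poly_act_tD_commutator:
  assumes "monom 1 2 dvd q" "monom 1 2 dvd p"
  shows "poly_act tD (q * pderiv p - pderiv q * p) u
    = poly_act tD q (poly_act tD p u) - poly_act tD p (poly_act tD q u)"
proof -
  define \<Phi> where "\<Phi> q p = poly_act tD (q * pderiv p - pderiv q * p) u
    - (poly_act tD q (poly_act tD p u) - poly_act tD p (poly_act tD q u))" for q p
  have "\<Phi> q p = 0"
  proof (rule biadditive_eq_0_if_monoms[of \<Phi> 2 2])
    show "\<Phi> (q1 + q2) p = \<Phi> q1 p + \<Phi> q2 p" for q1 q2 p
    proof -
      have "(q1 + q2) * pderiv p - pderiv (q1 + q2) * p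
          = (q1 * pderiv p - pderiv q1 * p) + (q2 * pderiv p - pderiv q2 * p)"
        by (simp add: pderiv_add algebra_simps)
      then show ?thesis by (simp add: \<Phi>_def poly_act_add poly_act_add_right[OF inB_tD])
    qed
    show "\<Phi> q (p1 + p2) = \<Phi> q p1 + \<Phi> q p2" for q p1 p2
    proof -
      have "q * pderiv (p1 + p2) - pderiv q * (p1 + p2)
          = (q * pderiv p1 - pderiv q * p1) + (q * pderiv p2 - pderiv q * p2)"
        by (simp add: pderiv_add algebra_simps)
      then show ?thesis by (simp add: \<Phi>_def poly_act_add poly_act_add_right[OF inB_tD])
    qed
    show "2 \<le> n \<Longrightarrow> 2 \<le> m \<Longrightarrow> \<Phi> (monom b n) (monom a m) = 0" for a b n m
      using poly_act_tD_commutator_monom by (simp add: \<Phi>_def)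
  qed (use assms in auto)
  then show ?thesis by (simp add: \<Phi>_def)
qed

lemma poly_act_tI_commutator_monom:
  assumes tI: "\<And>j. inB A (tI j)" and "2 \<le> n" "1 \<le> m"
  shows "poly_act tI (monom b n * pderiv (monom a m)) u
    = poly_act tD (monom b n) (poly_act tI (monom a m) u) - poly_act tI (monom a m) (poly_act tD (monom b n) u)"
proof -
  have "monom b n * pderiv (monom a m) = monom (a * b * of_nat m) (n + m - 1)"
    using assms by (simp add: pderiv_monom mult_monom algebra_simps)
  moreover have "rho (tD n) (rho (tI m) u) - rho (tI m) (rho (tD n) u) = sc (of_nat m) (rho (tI (n + m - 1)) u)"
    using rho_commute[OF inB_tD tI, of n m u] act_bracket_D_I[of "int n - 1" "int m" u] assms
    by (simp add: algebra_simps of_nat_diff)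
  moreover have "poly_act tD (monom b n) (poly_act tI (monom a m) u)
      - poly_act tI (monom a m) (poly_act tD (monom b n) u)
      = sc (a * b) (rho (tD n) (rho (tI m) u) - rho (tI m) (rho (tD n) u))"
    by (simp add: poly_act_monom rho_scale[OF inB_tD] rho_scale[OF tI] scale_right_diff_distrib
        mult.commute)
  ultimately show ?thesis by (simp add: poly_act_monom)
qed

lemma poly_act_tI_commutator:
  assumes tI: "\<And>j. inB A (tI j)" and "monom 1 2 dvd p" "monom 1 1 dvd q"
  shows "poly_act tI (p * pderiv q) u
    = poly_act tD p (poly_act tI q u) - poly_act tI q (poly_act tD p u)"
proof -
  define \<Phi> where "\<Phi> p q = poly_act tI (p * pderiv q) u
    - (poly_act tD p (poly_act tI q u) - poly_act tI q (poly_act tD p u))" for p q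
  have "\<Phi> p q = 0"
  proof (rule biadditive_eq_0_if_monoms[of \<Phi> 2 1])
    show "\<Phi> (p1 + p2) q = \<Phi> p1 q + \<Phi> p2 q" for p1 p2 q
      by (simp add: \<Phi>_def distrib_right poly_act_add poly_act_add_right[OF inB_tD]
          poly_act_add_right[OF tI])
    show "\<Phi> p (q1 + q2) = \<Phi> p q1 + \<Phi> p q2" for p q1 q2
      by (simp add: \<Phi>_def pderiv_add distrib_left poly_act_add poly_act_add_right[OF inB_tD]
          poly_act_add_right[OF tI])
    show "2 \<le> n \<Longrightarrow> 1 \<le> m \<Longrightarrow> \<Phi> (monom b n) (monom a m) = 0" for a b n m
      using poly_act_tI_commutator_monom[OF tI] by (simp add: \<Phi>_def)
  qed (use assms in auto)
  then show ?thesis by (simp add: \<Phi>_def)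
qed

definition annihilator :: "(nat \<Rightarrow> gen) \<Rightarrow> nat \<Rightarrow> 'v set \<Rightarrow> complex poly set" where
  "annihilator f n U = {p. monom 1 n dvd p \<and> (\<forall>u\<in>U. poly_act f p u = 0)}"

lemma annihilator_diff:
  "p \<in> annihilator f n U \<Longrightarrow> q \<in> annihilator f n U \<Longrightarrow> p - q \<in> annihilator f n U"
  by (simp add: annihilator_def poly_act_diff dvd_diff)

lemma annihilator_smult: "p \<in> annihilator f n U \<Longrightarrow> smult c p \<in> annihilator f n U"
  by (simp add: annihilator_def poly_act_smult dvd_smult)

lemma annihilator_sum:
  "(\<And>i. i \<in> S \<Longrightarrow> p i \<in> annihilator f n U) \<Longrightarrow> (\<Sum>i\<in>S. p i) \<in> annihilator f n U"
proof (induct S rule: infinite_finite_induct)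
  case (insert i S)
  then show ?case
    by (simp add: annihilator_def poly_act_add dvd_add)
qed (simp_all add: annihilator_def poly_act_0)

lemma annihilator_nonzero:
  assumes f: "\<And>j. inB A (f j)" and "finite B"
    and stable: "\<And>j u. u \<in> span B \<Longrightarrow> rho (f (n + j)) u \<in> span B"
  obtains p where "p \<noteq> 0" "p \<in> annihilator f n (span B)"
proof -
  obtain N c where c: "\<exists>j\<le>N. c j \<noteq> 0" "\<forall>b\<in>B. (\<Sum>j\<le>N. sc (c j) (rho (f (n + j)) b)) = 0"
    using operators_dependent_on_finite_span[OF vector_space_axioms \<open>finite B\<close>, of "\<lambda>j. rho (f (n + j))"]
      stable span_base by blast
  define p where "p = (\<Sum>j\<le>N. monom (c j) (n + j))"
  obtain j0 where "j0 \<le> N" "c j0 \<noteq> 0" using c(1) by blast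
  then have "coeff p (n + j0) \<noteq> 0"
    unfolding p_def coeff_sum coeff_monom by simp
  then have "p \<noteq> 0" by auto
  have "poly_act f p b = (\<Sum>j\<le>N. poly_act f (monom (c j) (n + j)) b)" for b
    unfolding p_def
    by (simp only: sum_comp_morphism[where h = "\<lambda>p. poly_act f p b", OF poly_act_0 poly_act_add,
          symmetric] o_def)
  then have "poly_act f p b = (\<Sum>j\<le>N. sc (c j) (rho (f (n + j)) b))" for b
    by (simp add: poly_act_monom)
  then have "B \<subseteq> {u. poly_act f p u = 0}" using c(2) by auto
  then have "span B \<subseteq> {u. poly_act f p u = 0}"
    by (rule span_minimal) (rule module_hom.subspace_kernel[OF poly_act_module_hom[OF f]])
  moreover have "monom 1 n dvd p"
    unfolding p_def by (intro dvd_sum monom_1_dvd_monom) auto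
  ultimately show ?thesis using that \<open>p \<noteq> 0\<close> by (auto simp: annihilator_def)
qed

lemma rho_eq_0_if_monom_multiples_annihilate:
  assumes "\<And>q. monom 1 M * q \<in> annihilator f n U" "M \<le> j" "u \<in> U"
  shows "rho (f j) u = 0"
proof -
  have "monom 1 M * monom 1 (j - M) = (monom 1 j :: complex poly)"
    using assms(2) by (simp add: mult_monom)
  then have "poly_act f (monom 1 j) u = 0"
    using assms(1)[of "monom 1 (j - M)"] assms(3) by (simp add: annihilator_def)
  then show ?thesis by (simp add: poly_act_monom)
qed

lemma annihilator_tD_bracket:
  assumes "k \<ge> 1" "stable_from (int k) U" "subspace U"
    and p: "p \<in> annihilator tD (k + 1) U" and q: "monom 1 (k + 1) dvd q"
  shows "q * pderiv p - pderiv q * p \<in> annihilator tD (k + 1) U"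
proof -
  have p_dvd: "monom 1 (k + 1) dvd p" using p by (simp add: annihilator_def)
  have "monom 1 k dvd pderiv p" "monom 1 k dvd pderiv q"
    using monom_1_dvd_pderiv p_dvd q by simp_all
  then have "monom 1 (k + 1 + k) dvd q * pderiv p" "monom 1 (k + (k + 1)) dvd pderiv q * p"
    using monom_1_dvd_mult q p_dvd by blast+
  then have "monom 1 (k + 1) dvd q * pderiv p - pderiv q * p"
    by (intro dvd_diff) (auto elim: monom_1_dvd_mono)
  moreover have "poly_act tD (q * pderiv p - pderiv q * p) u = 0" if "u \<in> U" for u
  proof -
    have "monom 1 2 dvd q" "monom 1 2 dvd p"
      using q p_dvd \<open>k \<ge> 1\<close> by (auto elim: monom_1_dvd_mono)
    then have "poly_act tD (q * pderiv p - pderiv q * p) u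
        = poly_act tD q (poly_act tD p u) - poly_act tD p (poly_act tD q u)"
      by (rule poly_act_tD_commutator)
    also have "\<dots> = 0"
      using p poly_act_tD_in_stable[OF assms(2,3) q that] that
        module_hom.zero[OF poly_act_module_hom[OF inB_tD]]
      by (simp add: annihilator_def)
    finally show ?thesis .
  qed
  ultimately show ?thesis by (simp add: annihilator_def)
qed

text \<open>From one nonzero \<open>f\<close> in the annihilator we get all multiples of \<open>f\<^sup>2 t\<^sup>k\<^sup>+\<^sup>1\<close>, since
  \<open>f\<^sup>2 t\<^sup>j\<close> is (up to sign) the bracket of \<open>f\<close> with \<open>f t\<^sup>j\<^sup>+\<^sup>1 / (j + 1)\<close>.\<close>

lemma annihilator_tD_square_multiples:
  assumes "k \<ge> 1" "stable_from (int k) U" "subspace U" and f: "f \<in> annihilator tD (k + 1) U"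
  shows "f * f * monom 1 (k + 1) * q \<in> annihilator tD (k + 1) U"
proof -
  have f_dvd: "monom 1 (k + 1) dvd f" using f by (simp add: annihilator_def)
  have square: "f * f * monom 1 j \<in> annihilator tD (k + 1) U" if "k + 1 \<le> j" for j
  proof -
    define g where "g = f * monom (1 / of_nat (j + 1)) (j + 1)"
    have "monom 1 (k + 1) dvd g" unfolding g_def using f_dvd by simp
    then have "g * pderiv f - pderiv g * f \<in> annihilator tD (k + 1) U"
      by (rule annihilator_tD_bracket[OF assms])
    moreover have "pderiv (monom (1 / of_nat (j + 1) :: complex) (j + 1)) = monom 1 j"
      by (simp add: pderiv_monom del: of_nat_Suc)
    then have "g * pderiv f - pderiv g * f = smult (-1) (f * f * monom 1 j)"
      unfolding g_def pderiv_mult by (simp add: algebra_simps)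
    ultimately show ?thesis using annihilator_smult[of _ tD "k + 1" U "-1"] by fastforce
  qed
  have "f * f * monom 1 (k + 1) * q = f * f * monom 1 (k + 1) * (\<Sum>i\<le>degree q. monom (coeff q i) i)"
    by (simp add: poly_as_sum_of_monoms)
  also have "\<dots> = (\<Sum>i\<le>degree q. smult (coeff q i) (f * f * monom 1 (k + 1 + i)))"
    unfolding sum_distrib_left
    by (intro sum.cong refl) (simp add: mult_monom smult_monom mult.assoc[symmetric]
        flip: smult_monom_mult mult_smult_right)
  also have "\<dots> \<in> annihilator tD (k + 1) U"
    by (intro annihilator_sum annihilator_smult square) simp
  finally show ?thesis .
qed

lemma D_eventually_annihilates:
  assumes "k \<ge> 1" "finite B" and stable: "stable_from (int k) (span B)"
  obtains N where "\<And>i u. N \<le> i \<Longrightarrow> u \<in> span B \<Longrightarrow> rho (D i) u = 0"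
proof -
  let ?K = "annihilator tD (k + 1) (span B)"
  have "rho (tD (k + 1 + j)) u \<in> span B" if "u \<in> span B" for j u
    using stable inB_tD[of A "k + 1 + j"] that unfolding stable_from_def by simp
  from annihilator_nonzero[where f = tD and n = "k + 1", OF inB_tD \<open>finite B\<close> this]
  obtain f where f: "f \<noteq> 0" "f \<in> ?K" by blast
  have "\<exists>M. \<forall>q. monom 1 M * q \<in> ?K"
  proof (rule exists_monom_ideal_within[of "k + 1"])
    show "p - q \<in> ?K" if "p \<in> ?K" "q \<in> ?K" for p q using that by (rule annihilator_diff)
    show "monom 1 (k + 1) * pderiv p + (- pderiv (monom 1 (k + 1))) * p \<in> ?K" if "p \<in> ?K" for p
      using annihilator_tD_bracket[OF \<open>k \<ge> 1\<close> stable subspace_span that, of "monom 1 (k + 1)"]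
      by (simp add: monom_1_dvd_monom)
    show "f * f * monom 1 (k + 1) \<noteq> 0" using f(1) by simp
    show "f * f * monom 1 (k + 1) * q \<in> ?K" for q
      by (rule annihilator_tD_square_multiples[OF \<open>k \<ge> 1\<close> stable subspace_span f(2)])
  qed simp
  then obtain M where M: "\<And>q. monom 1 M * q \<in> ?K" by blast
  show ?thesis
  proof (rule that[of "int M"])
    fix i u assume "int M \<le> i" "u \<in> span B"
    then show "rho (D i) u = 0"
      using rho_eq_0_if_monom_multiples_annihilate[OF M, of "nat (i + 1)" u] by simp
  qed
qed

lemma annihilator_tI_bracket:
  assumes tI: "\<And>j. inB A (tI j)" and "k \<ge> 1" "stable_from (int k) U" "subspace U"
    and g: "g \<in> annihilator tI k U" and p: "monom 1 (k + 1) dvd p"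
  shows "p * pderiv g \<in> annihilator tI k U"
proof -
  have g_dvd: "monom 1 k dvd g" using g by (simp add: annihilator_def)
  then have "monom 1 (k - 1) dvd pderiv g"
    using \<open>k \<ge> 1\<close> monom_1_dvd_pderiv[of "k - 1" g] by simp
  then have "monom 1 (k + 1 + (k - 1)) dvd p * pderiv g"
    using monom_1_dvd_mult p by blast
  then have "monom 1 k dvd p * pderiv g" by (auto elim: monom_1_dvd_mono)
  moreover have "poly_act tI (p * pderiv g) u = 0" if "u \<in> U" for u
  proof -
    have "monom 1 2 dvd p" "monom 1 1 dvd g"
      using p g_dvd \<open>k \<ge> 1\<close> by (auto elim: monom_1_dvd_mono)
    then have "poly_act tI (p * pderiv g) u
        = poly_act tD p (poly_act tI g u) - poly_act tI g (poly_act tD p u)"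
      by (rule poly_act_tI_commutator[OF tI])
    also have "\<dots> = 0"
      using g poly_act_tD_in_stable[OF assms(3,4) p that] that
        module_hom.zero[OF poly_act_module_hom[OF inB_tD]]
      by (simp add: annihilator_def)
    finally show ?thesis .
  qed
  ultimately show ?thesis by (simp add: annihilator_def)
qed

lemma I_eventually_annihilates:
  assumes tI: "\<And>j. inB A (tI j)" and "k \<ge> 1" "finite B" and stable: "stable_from (int k) (span B)"
  obtains N where "\<And>i u. N \<le> i \<Longrightarrow> u \<in> span B \<Longrightarrow> rho (I i) u = 0"
proof -
  let ?K = "annihilator tI k (span B)"
  have "rho (tI (k + j)) u \<in> span B" if "u \<in> span B" for j u
    using stable tI[of "k + j"] that unfolding stable_from_def by simp
  from annihilator_nonzero[where f = tI and n = k, OF tI \<open>finite B\<close> this]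
  obtain g where g: "g \<noteq> 0" "g \<in> ?K" by blast
  have "pderiv g \<noteq> 0"
  proof
    assume "pderiv g = 0"
    moreover have "coeff g 0 = 0"
      using g(2) \<open>k \<ge> 1\<close> by (auto simp: annihilator_def monom_1_dvd_iff')
    ultimately show False
      using g(1) by (metis degree_0_id pCons_0_0 pderiv_eq_0_iff)
  qed
  have "\<exists>M. \<forall>q. monom 1 M * q \<in> ?K"
  proof (rule exists_monom_ideal_within[of "k + 1" _ 0])
    show "p - q \<in> ?K" if "p \<in> ?K" "q \<in> ?K" for p q using that by (rule annihilator_diff)
    show "monom 1 (k + 1) * pderiv p + 0 * p \<in> ?K" if "p \<in> ?K" for p
      using annihilator_tI_bracket[OF tI \<open>k \<ge> 1\<close> stable subspace_span that, of "monom 1 (k + 1)"]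
      by (simp add: monom_1_dvd_monom)
    show "monom 1 (k + 1) * pderiv g \<noteq> 0" using \<open>pderiv g \<noteq> 0\<close> by simp
    show "monom 1 (k + 1) * pderiv g * q \<in> ?K" for q
      using annihilator_tI_bracket[OF tI \<open>k \<ge> 1\<close> stable subspace_span g(2), of "monom 1 (k + 1) * q"]
      by (simp add: ac_simps)
  qed simp
  then obtain M where M: "\<And>q. monom 1 M * q \<in> ?K" by blast
  show ?thesis
  proof (rule that[of "int M"])
    fix i u assume "int M \<le> i" "u \<in> span B"
    then show "rho (I i) u = 0"
      using rho_eq_0_if_monom_multiples_annihilate[OF M, of "nat i" u] by simp
  qed
qed

lemma condC_imp_condB:
  assumes "simple_module A sc rho" "condC A sc rho"
  shows "condB A sc rho"
proof -
  obtain v0 :: 'v where "v0 \<noteq> 0" using assms(1) unfolding simple_module_def by auto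
  obtain k where "k \<ge> 1" "\<forall>v. \<exists>B. finite B \<and> v \<in> span B \<and> stable_from k (span B)"
    using assms(2) unfolding condC_iff by blast
  then obtain B where "finite B" "v0 \<in> span B" "stable_from k (span B)" by blast
  then have stable: "stable_from (int (nat k)) (span B)" using \<open>k \<ge> 1\<close> by simp
  have "nat k \<ge> 1" using \<open>k \<ge> 1\<close> by simp
  obtain N1 where N1: "\<And>i u. N1 \<le> i \<Longrightarrow> u \<in> span B \<Longrightarrow> rho (D i) u = 0"
    using D_eventually_annihilates[OF \<open>nat k \<ge> 1\<close> \<open>finite B\<close> stable] by metis
  obtain N2 where N2: "\<And>i u. (\<And>j. inB A (tI j)) \<Longrightarrow> N2 \<le> i \<Longrightarrow> u \<in> span B \<Longrightarrow> rho (I i) u = 0"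
  proof (cases "\<forall>j. inB A (tI j)")
    case True
    then show ?thesis
      using I_eventually_annihilates[OF _ \<open>nat k \<ge> 1\<close> \<open>finite B\<close> stable] that by metis
  qed (use that in blast)
  have "annihilated_from (max 1 (max N1 N2)) v0"
    unfolding annihilated_from_def
  proof (intro allI impI)
    fix g assume g: "inB A g" "max 1 (max N1 N2) \<le> deg g"
    show "rho g v0 = 0"
    proof (cases g)
      case (I i)
      then have "\<And>j. inB A (tI j)" using g by (cases A) auto
      then show ?thesis using N2 g \<open>v0 \<in> span B\<close> I by auto
    qed (use N1 g \<open>v0 \<in> span B\<close> in auto)
  qed
  then show ?thesis
    unfolding condB_iff using \<open>v0 \<noteq> 0\<close> by (intro exI[of _ v0] exI[of _ "max 1 (max N1 N2)"]) auto
qed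

end

theorem lemma1:
  fixes A :: alg and sc :: "complex \<Rightarrow> 'v::ab_group_add \<Rightarrow> 'v" and rho :: "gen \<Rightarrow> 'v \<Rightarrow> 'v"
  assumes "simple_module A sc rho"
  shows "(condA A sc rho \<longleftrightarrow> condB A sc rho) \<and> (condA A sc rho \<longleftrightarrow> condC A sc rho)
         \<and> (condA A sc rho \<longleftrightarrow> condD A sc rho)"
proof -
  interpret lie_module A sc rho
    using assms unfolding simple_module_def by unfold_locales auto
  have "condA A sc rho \<longleftrightarrow> condB A sc rho" using condA_imp_condB condB_imp_condA assms by blast
  moreover have "condB A sc rho \<longleftrightarrow> condC A sc rho" using condB_imp_condC condC_imp_condB assms by blast
  moreover have "condB A sc rho \<longleftrightarrow> condD A sc rho" using condB_imp_condD condD_imp_condB assms by blast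
  ultimately show ?thesis by blast
qed

end
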